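(* Let $n\ge 2$ be an integer, let $A$ be a $C^*$-algebra, and let $p\in(0,1)$, $\theta\in[0,\infty)$ be real numbers. Suppose $f:A\to A$ satisfies $$\Big\|\mu f\Big(\frac{x+y}{2}\Big)+\mu f\Big(\frac{x-y}{2}\Big)-f(\mu x)+f(a^n)-\big(f(a)a^{n-1}+af(a)a^{n-2}+\cdots+a^{n-2}f(a)a+a^{n-1}f(a)\big)+f(w^* )-(f(w))^*\Big\|\le \theta(\|x\|^p+\|y\|^p+\|a\|^p+\|w\|^p)$$ for all $\mu\in\mathbb{T}$ and all $x,y,a,w\in A$. Then there exists a unique $*$-$n$-Jordan derivation $D:A\to A$ such that $$\|f(x)-D(x)\|\le \frac{2^p\theta}{2-2^p}\|x\|^p$$ for all $x\in A$.
   Context: $\mathbb{T}=\{\mu\in\mathbb{C}:|\mu|=1\}$. For an integer $n\ge 2$, an $n$-Jordan derivation on an algebra $A$ is a linear map $D:A\to A$ such that $D(a^n)=D(a)a^{n-1}+aD(a)a^{n-2}+\cdots+a^{n-2}D(a)a+a^{n-1}D(a)$ for all $a\in A$. On a $C^*$-algebra, a $*$-$n$-Jordan derivation is an $n$-Jordan derivation $D$ with $D(a^* )=(D(a))^*$ for all $a\in A$. *)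

theory Defs
  imports "HOL-Analysis.Analysis"
begin

text \<open>HOL has no complex vector space classes,
  so complex scalar multiplication is a class parameter compatible with scaleR.\<close>

class cstar_algebra = real_normed_algebra + banach +
  fixes cscale :: "complex \<Rightarrow> 'a \<Rightarrow> 'a" (infixr "*\<^sub>C" 75)
    and cstar :: "'a \<Rightarrow> 'a"
  assumes cscale_add_right: "c *\<^sub>C (x + y) = c *\<^sub>C x + c *\<^sub>C y"
    and cscale_add_left: "(b + c) *\<^sub>C x = b *\<^sub>C x + c *\<^sub>C x"
    and cscale_cscale: "b *\<^sub>C (c *\<^sub>C x) = (b * c) *\<^sub>C x"
    and cscale_one: "1 *\<^sub>C x = x"
    and scaleR_cscale: "r *\<^sub>R x = complex_of_real r *\<^sub>C x"
    and norm_cscale: "norm (c *\<^sub>C x) = cmod c * norm x"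
    and mult_cscale_left: "(c *\<^sub>C x) * y = c *\<^sub>C (x * y)"
    and mult_cscale_right: "x * (c *\<^sub>C y) = c *\<^sub>C (x * y)"
    and cstar_add: "cstar (x + y) = cstar x + cstar y"
    and cstar_cscale: "cstar (c *\<^sub>C x) = cnj c *\<^sub>C cstar x"
    and cstar_mult: "cstar (x * y) = cstar y * cstar x"
    and cstar_cstar: "cstar (cstar x) = x"
    and cstar_identity: "norm (cstar x * x) = (norm x)\<^sup>2"

text \<open>Powers without a unit: apow a n = a^n for n \<ge> 1; left/right multiplication iterates.\<close>

definition apow :: "'a::times \<Rightarrow> nat \<Rightarrow> 'a" where
  "apow a n = ((\<lambda>z. a * z) ^^ (n - 1)) a"

definition lmulpow :: "'a::times \<Rightarrow> nat \<Rightarrow> 'a \<Rightarrow> 'a" where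
  "lmulpow a k x = ((\<lambda>z. a * z) ^^ k) x"

definition rmulpow :: "'a::times \<Rightarrow> nat \<Rightarrow> 'a \<Rightarrow> 'a" where
  "rmulpow a k x = ((\<lambda>z. z * a) ^^ k) x"

definition jordan_sum :: "nat \<Rightarrow> 'a::{times,comm_monoid_add} \<Rightarrow> 'a \<Rightarrow> 'a" where
  "jordan_sum n a d = (\<Sum>i<n. lmulpow a i (rmulpow a (n - 1 - i) d))"

definition clinear_map :: "('a::cstar_algebra \<Rightarrow> 'a) \<Rightarrow> bool" where
  "clinear_map D \<longleftrightarrow> (\<forall>x y. D (x + y) = D x + D y) \<and> (\<forall>c x. D (c *\<^sub>C x) = c *\<^sub>C D x)"

definition n_jordan_derivation :: "nat \<Rightarrow> ('a::cstar_algebra \<Rightarrow> 'a) \<Rightarrow> bool" where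
  "n_jordan_derivation n D \<longleftrightarrow> clinear_map D \<and> (\<forall>a. D (apow a n) = jordan_sum n a (D a))"

definition star_n_jordan_derivation :: "nat \<Rightarrow> ('a::cstar_algebra \<Rightarrow> 'a) \<Rightarrow> bool" where
  "star_n_jordan_derivation n D \<longleftrightarrow> n_jordan_derivation n D \<and> (\<forall>a. D (cstar a) = cstar (D a))"

end

theory Submission
  imports Defs
begin

text \<open>Hyers' direct method. Once f 0 = 0 is known, setting all but one group of variables to 0
  splits the hypothesis into four independent approximate identities. Approximate additivity makes
  f approximately doubling, so D x = lim 2^(-k) f (2^k x) exists and lies within
  2^p \<theta> / (2 - 2^p) \<parallel>x\<parallel>^p of f x. Each approximate identity, rescaled by 2^k, has an error of
  order (2^p / 2)^k, which tends to 0 since p < 1; hence it holds exactly for D. Additivity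
  together with D (\<mu> x) = \<mu> D x for unimodular \<mu> gives complex linearity, because every complex
  number is a finite sum of unimodular ones. Uniqueness holds because any additive map within
  O(\<parallel>x\<parallel>^p) of f equals the same limit.\<close>

lemma cscale_zero [simp]: "c *\<^sub>C (0::'a::cstar_algebra) = 0"
  using cscale_add_right[of c "0::'a" 0] by simp

lemma cscale_zero_left [simp]: "0 *\<^sub>C (x::'a::cstar_algebra) = 0"
  using cscale_add_left[of 0 0 x] by simp

lemma cscale_sum_left: "(\<Sum>i\<in>I. b i) *\<^sub>C (x::'a::cstar_algebra) = (\<Sum>i\<in>I. b i *\<^sub>C x)"
  by (induct I rule: infinite_finite_induct) (simp_all add: cscale_add_left)

lemma cscale_scaleR_commute: "c *\<^sub>C (r *\<^sub>R (x::'a::cstar_algebra)) = r *\<^sub>R (c *\<^sub>C x)"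
  by (simp add: scaleR_cscale cscale_cscale mult.commute)

lemma cscale_minus_one: "(-1::complex) *\<^sub>C (x::'a::cstar_algebra) = - x"
  using scaleR_cscale[of "-1" x] by simp

lemma bounded_linear_cscale: "bounded_linear (\<lambda>x::'a::cstar_algebra. c *\<^sub>C x)"
  by (rule bounded_linear_intro[where K = "cmod c"])
    (simp_all add: cscale_add_right cscale_scaleR_commute norm_cscale mult.commute)

lemma cstar_zero [simp]: "cstar (0::'a::cstar_algebra) = 0"
  using cstar_add[of "0::'a" 0] by simp

lemma cstar_scaleR: "cstar (r *\<^sub>R (x::'a::cstar_algebra)) = r *\<^sub>R cstar x"
  by (simp add: scaleR_cscale cstar_cscale)

lemma norm_le_norm_cstar: "norm (x::'a::cstar_algebra) \<le> norm (cstar x)"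
proof (cases "x = 0")
  case False
  have "norm x * norm x \<le> norm (cstar x) * norm x"
    using cstar_identity[of x] norm_mult_ineq[of "cstar x" x] by (simp add: power2_eq_square)
  with False show ?thesis by simp
qed simp

lemma norm_cstar: "norm (cstar (x::'a::cstar_algebra)) = norm x"
  using norm_le_norm_cstar[of x] norm_le_norm_cstar[of "cstar x"] by (simp add: cstar_cstar)

lemma bounded_linear_cstar: "bounded_linear (cstar :: 'a::cstar_algebra \<Rightarrow> 'a)"
  by (rule bounded_linear_intro[where K = 1]) (simp_all add: cstar_add cstar_scaleR norm_cstar)

lemma unimodular_sum_decomposition:
  assumes "cmod z \<le> 2"
  obtains u v where "cmod u = 1" "cmod v = 1" "z = u + v"
proof (cases "z = 0")
  case True
  then show ?thesis by (intro that[of 1 "-1"]) simp_all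
next
  case False
  define t where "t = cmod z / 2"
  define s where "s = sqrt (1 - t\<^sup>2)"
  define w where "w = z / complex_of_real (cmod z)"
  have "t\<^sup>2 \<le> 1" using assms by (simp add: t_def power_le_one)
  then have "s\<^sup>2 = 1 - t\<^sup>2" by (simp add: s_def)
  then have unit: "cmod (Complex t s) = 1" "cmod (Complex t (-s)) = 1"
    by (simp_all add: cmod_def)
  have "cmod w = 1" using False by (simp add: w_def norm_divide)
  moreover have "w * Complex t s + w * Complex t (-s) = w * complex_of_real (2 * t)"
    by (simp add: distrib_left[symmetric] complex_eq_iff)
  then have "z = w * Complex t s + w * Complex t (-s)"
    using False by (simp add: w_def t_def)
  ultimately show ?thesis using unit by (intro that) (simp_all add: norm_mult)
qed

lemma clinear_mapI_unimodular:
  fixes D :: "'a::cstar_algebra \<Rightarrow> 'a"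
  assumes add: "\<And>x y. D (x + y) = D x + D y"
    and unimodular: "\<And>\<mu> x. cmod \<mu> = 1 \<Longrightarrow> D (\<mu> *\<^sub>C x) = \<mu> *\<^sub>C D x"
  shows "clinear_map D"
  unfolding clinear_map_def
proof (intro conjI allI)
  show "D (x + y) = D x + D y" for x y by (rule add)
  interpret D: additive D by standard (rule add)
  fix c x
  obtain M :: nat where M: "cmod c / 2 \<le> real M" "M \<noteq> 0"
    using real_arch_simple[of "max 1 (cmod c / 2)"] by (metis max.bounded_iff of_nat_0 not_one_le_zero)
  define z where "z = c / of_nat M"
  have c_eq: "c = (\<Sum>i<M. z)" using M by (simp add: z_def)
  have "cmod z \<le> 2" using M by (simp add: z_def norm_divide divide_le_eq mult.commute)
  then obtain u v where uv: "cmod u = 1" "cmod v = 1" "z = u + v"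
    by (rule unimodular_sum_decomposition)
  have Dz: "D (z *\<^sub>C y) = z *\<^sub>C D y" for y
    using uv by (simp add: cscale_add_left add unimodular)
  show "D (c *\<^sub>C x) = c *\<^sub>C D x"
    by (simp add: c_eq cscale_sum_left D.sum Dz del: sum_constant)
qed

lemma lmulpow_0 [simp]: "lmulpow a 0 x = x"
  by (simp add: lmulpow_def)

lemma rmulpow_0 [simp]: "rmulpow a 0 x = x"
  by (simp add: rmulpow_def)

lemma lmulpow_Suc: "lmulpow a (Suc i) x = a * lmulpow a i x"
  by (simp add: lmulpow_def)

lemma rmulpow_Suc: "rmulpow a (Suc i) x = rmulpow a i x * a"
  by (simp add: rmulpow_def)

lemma lmulpow_scaleR:
  "lmulpow (r *\<^sub>R (a::'a::real_algebra)) i (s *\<^sub>R x) = (r ^ i * s) *\<^sub>R lmulpow a i x"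
  by (induct i) (simp_all add: lmulpow_Suc)

lemma rmulpow_scaleR:
  "rmulpow (r *\<^sub>R (a::'a::real_algebra)) i (s *\<^sub>R x) = (r ^ i * s) *\<^sub>R rmulpow a i x"
  by (induct i) (simp_all add: rmulpow_Suc)

lemma lmulpow_zero [simp]: "lmulpow (a::'a::real_algebra) i 0 = 0"
  by (induct i) (simp_all add: lmulpow_Suc)

lemma rmulpow_zero [simp]: "rmulpow (a::'a::real_algebra) i 0 = 0"
  by (induct i) (simp_all add: rmulpow_Suc)

lemma jordan_sum_zero [simp]: "jordan_sum n (a::'a::real_algebra) 0 = 0"
  by (simp add: jordan_sum_def)

lemma apow_zero [simp]: "apow (0::'a::real_algebra) n = 0"
proof -
  have "((\<lambda>z. 0 * z) ^^ m) (0::'a) = 0" for m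
    by (induct m) simp_all
  then show ?thesis
    by (simp add: apow_def)
qed

lemma apow_scaleR:
  "apow (r *\<^sub>R (a::'a::real_algebra)) (Suc m) = r ^ Suc m *\<^sub>R apow a (Suc m)"
  using lmulpow_scaleR[of r a m r a] by (simp add: apow_def lmulpow_def mult.commute)

lemma jordan_sum_scaleR:
  fixes a :: "'a::real_algebra"
  shows "jordan_sum (Suc m) (r *\<^sub>R a) (s *\<^sub>R d) = (r ^ m * s) *\<^sub>R jordan_sum (Suc m) a d"
proof -
  have "r ^ i * (r ^ (m - i) * s) = r ^ m * s" if "i < Suc m" for i
    using that by (simp add: mult.assoc[symmetric] power_add[symmetric])
  then show ?thesis
    unfolding jordan_sum_def scaleR_sum_right
    by (intro sum.cong refl) (simp add: lmulpow_scaleR rmulpow_scaleR)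
qed

lemma tendsto_jordan_sum:
  fixes a :: "'a::real_normed_algebra"
  assumes "X \<longlonglongrightarrow> d"
  shows "(\<lambda>k. jordan_sum n a (X k)) \<longlonglongrightarrow> jordan_sum n a d"
proof -
  have "(\<lambda>k. lmulpow a i (rmulpow a j (X k))) \<longlonglongrightarrow> lmulpow a i (rmulpow a j d)" for i j
  proof (induct i)
    case 0
    show ?case using assms by (induct j) (simp_all add: rmulpow_Suc tendsto_mult_right)
  qed (simp add: lmulpow_Suc tendsto_mult_left)
  then show ?thesis unfolding jordan_sum_def by (intro tendsto_sum)
qed

lemma norm_pow2_scaleR_powr:
  "norm ((2::real) ^ k *\<^sub>R (x::'a::real_normed_vector)) powr p = (2 powr p) ^ k * norm x powr p"
proof -
  have "(2 ^ k) powr p = (2 powr p) ^ k"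
    by (simp add: powr_power powr_powr powr_realpow[symmetric] mult.commute)
  then show ?thesis
    by (simp add: powr_mult)
qed

lemma two_powr_less_two: "p < 1 \<Longrightarrow> 2 powr p < (2::real)"
  using powr_less_mono[of p 1 2] by simp

lemma scaled_errors_tendsto_zero:
  fixes e :: "nat \<Rightarrow> 'a::real_normed_vector"
  assumes bound: "\<And>k. norm (e k) \<le> C * (2 powr p) ^ k" and "p < 1"
  shows "(\<lambda>k. inverse (2 ^ k) *\<^sub>R e k) \<longlonglongrightarrow> 0"
proof (rule Lim_null_comparison)
  have "(2 powr p / 2) ^ k = inverse (2 ^ k) * (2 powr p) ^ k" for k
    by (simp add: power_divide field_simps)
  then show "\<forall>\<^sub>F k in sequentially. norm (inverse (2 ^ k) *\<^sub>R e k) \<le> C * (2 powr p / 2) ^ k"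
    using bound by (simp add: mult.left_commute)
  show "(\<lambda>k. C * (2 powr p / 2) ^ k) \<longlonglongrightarrow> 0"
    using two_powr_less_two[OF \<open>p < 1\<close>] by (intro tendsto_mult_right_zero LIMSEQ_power_zero) simp
qed

lemma LIMSEQ_eq_if_diff_tendsto_zero:
  fixes X Y :: "nat \<Rightarrow> 'a::real_normed_vector"
  assumes "X \<longlonglongrightarrow> a" and "Y \<longlonglongrightarrow> b" and "(\<lambda>k. X k - Y k) \<longlonglongrightarrow> 0"
  shows "a = b"
proof -
  have "(\<lambda>k. X k - Y k) \<longlonglongrightarrow> a - b"
    using assms(1,2) by (rule tendsto_diff)
  then have "a - b = 0"
    using assms(3)
    by (rule LIMSEQ_unique)
  then show ?thesis
    by simp
qed

definition doubling_seq :: "('a::real_normed_vector \<Rightarrow> 'b::real_normed_vector) \<Rightarrow> nat \<Rightarrow> 'a \<Rightarrow> 'b"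
  where "doubling_seq f k x = inverse (2 ^ k) *\<^sub>R f (2 ^ k *\<^sub>R x)"

definition doubling_limit :: "('a::real_normed_vector \<Rightarrow> 'b::real_normed_vector) \<Rightarrow> 'a \<Rightarrow> 'b"
  where "doubling_limit f x = lim (\<lambda>k. doubling_seq f k x)"

locale approx_doubling =
  fixes f :: "'a::real_normed_vector \<Rightarrow> 'b::banach" and c p :: real
  assumes approx_double: "\<And>u. norm (f (2 *\<^sub>R u) - 2 *\<^sub>R f u) \<le> c * norm u powr p"
    and p_less_1: "p < 1"
begin

lemma norm_doubling_seq_step_le:
  "norm (doubling_seq f (Suc k) x - doubling_seq f k x) \<le> c * norm x powr p / 2 * (2 powr p / 2) ^ k"
proof -
  let ?u = "(2::real) ^ k *\<^sub>R x"
  have "doubling_seq f (Suc k) x - doubling_seq f k x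
      = inverse (2 ^ Suc k) *\<^sub>R (f (2 *\<^sub>R ?u) - 2 *\<^sub>R f ?u)"
    by (simp add: doubling_seq_def algebra_simps)
  then have "norm (doubling_seq f (Suc k) x - doubling_seq f k x)
      = inverse (2 ^ Suc k) * norm (f (2 *\<^sub>R ?u) - 2 *\<^sub>R f ?u)"
    by simp
  also have "\<dots> \<le> inverse (2 ^ Suc k) * (c * norm ?u powr p)"
    by (intro mult_left_mono approx_double) simp
  also have "\<dots> = c * norm x powr p / 2 * (2 powr p / 2) ^ k"
    unfolding norm_pow2_scaleR_powr by (simp add: power_divide field_simps)
  finally show ?thesis .
qed

lemma summable_norm_doubling_seq_step:
  "summable (\<lambda>k. norm (doubling_seq f (Suc k) x - doubling_seq f k x))"
proof (rule summable_comparison_test)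
  show "\<exists>N. \<forall>k\<ge>N. norm (norm (doubling_seq f (Suc k) x - doubling_seq f k x))
      \<le> c * norm x powr p / 2 * (2 powr p / 2) ^ k"
    using norm_doubling_seq_step_le by auto
  show "summable (\<lambda>k. c * norm x powr p / 2 * (2 powr p / 2) ^ k)"
    using two_powr_less_two[OF p_less_1] by (intro summable_mult summable_geometric) simp
qed

lemma doubling_seq_tendsto: "(\<lambda>k. doubling_seq f k x) \<longlonglongrightarrow> doubling_limit f x"
proof -
  have "doubling_seq f 0 x = f x"
    by (simp add: doubling_seq_def)
  then have "(\<lambda>k. doubling_seq f k x) =
      (\<lambda>k. f x + (\<Sum>j<k. doubling_seq f (Suc j) x - doubling_seq f j x))"
    by (simp add: sum_lessThan_telescope[of "\<lambda>j. doubling_seq f j x"])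
  moreover have "(\<lambda>k. f x + (\<Sum>j<k. doubling_seq f (Suc j) x - doubling_seq f j x)) \<longlonglongrightarrow>
      f x + (\<Sum>j. doubling_seq f (Suc j) x - doubling_seq f j x)"
    by (intro tendsto_add tendsto_const summable_LIMSEQ
        summable_norm_cancel[OF summable_norm_doubling_seq_step])
  ultimately have tends: "(\<lambda>k. doubling_seq f k x) \<longlonglongrightarrow>
      f x + (\<Sum>j. doubling_seq f (Suc j) x - doubling_seq f j x)"
    by (simp only:)
  then show ?thesis
    using limI[OF tends] by (simp add: doubling_limit_def)
qed

lemma norm_diff_doubling_limit_le:
  "norm (f x - doubling_limit f x) \<le> c / (2 - 2 powr p) * norm x powr p"
proof -
  let ?d = "\<lambda>k. doubling_seq f (Suc k) x - doubling_seq f k x"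
  let ?C = "c * norm x powr p / 2" and ?r = "2 powr p / 2"
  have r: "0 \<le> ?r" "?r < 1" using two_powr_less_two[OF p_less_1] by simp_all
  have "?d sums (doubling_limit f x - f x)"
    using telescope_sums[OF doubling_seq_tendsto] by (simp add: doubling_seq_def)
  then have "norm (f x - doubling_limit f x) = norm (\<Sum>k. ?d k)"
    by (simp add: sums_iff norm_minus_commute)
  also have "\<dots> \<le> (\<Sum>k. norm (?d k))"
    by (rule summable_norm[OF summable_norm_doubling_seq_step])
  also have "\<dots> \<le> (\<Sum>k. ?C * ?r ^ k)"
    using r by (intro suminf_le summable_norm_doubling_seq_step summable_mult summable_geometric
        norm_doubling_seq_step_le) simp
  also have "\<dots> = ?C * (\<Sum>k. ?r ^ k)"
    using r by (intro suminf_mult summable_geometric) simp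
  also have "\<dots> = ?C / (1 - ?r)"
    using r by (simp add: suminf_geometric)
  also have "\<dots> = c / (2 - 2 powr p) * norm x powr p"
    using r by (simp add: field_simps)
  finally show ?thesis .
qed

lemma doubling_limit_unique:
  assumes double: "\<And>x k. D (2 ^ k *\<^sub>R x) = 2 ^ k *\<^sub>R D x"
    and close: "\<And>x. norm (f x - D x) \<le> K * norm x powr p"
  shows "D = doubling_limit f"
proof
  fix x
  have "doubling_seq f k x - D x = inverse (2 ^ k) *\<^sub>R (f (2 ^ k *\<^sub>R x) - D (2 ^ k *\<^sub>R x))" for k
    by (simp add: doubling_seq_def double scaleR_diff_right)
  moreover have "(\<lambda>k. inverse (2 ^ k) *\<^sub>R (f (2 ^ k *\<^sub>R x) - D (2 ^ k *\<^sub>R x))) \<longlonglongrightarrow> 0"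
  proof (rule scaled_errors_tendsto_zero[OF _ p_less_1])
    show "norm (f (2 ^ k *\<^sub>R x) - D (2 ^ k *\<^sub>R x)) \<le> K * norm x powr p * (2 powr p) ^ k" for k
      using close[of "2 ^ k *\<^sub>R x"] unfolding norm_pow2_scaleR_powr by (simp only: mult_ac)
  qed
  ultimately have "(\<lambda>k. doubling_seq f k x - D x) \<longlonglongrightarrow> 0"
    by simp
  then have "(\<lambda>k. doubling_seq f k x) \<longlonglongrightarrow> D x"
    by (rule LIM_zero_cancel)
  then show "D x = doubling_limit f x"
    using doubling_seq_tendsto by (rule LIMSEQ_unique)
qed

end

lemma doubling_seq_apow_diff:
  fixes f :: "'a::real_normed_algebra \<Rightarrow> 'a" and k :: nat
  defines "t \<equiv> (2::real) ^ k"
  shows "doubling_seq f (Suc m * k) (apow a (Suc m)) - jordan_sum (Suc m) a (doubling_seq f k a)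
    = inverse t *\<^sub>R inverse (t ^ m) *\<^sub>R
        (f (apow (t *\<^sub>R a) (Suc m)) - jordan_sum (Suc m) (t *\<^sub>R a) (f (t *\<^sub>R a)))"
proof -
  have t: "t \<noteq> 0" by (simp add: t_def)
  have "(2::real) ^ (Suc m * k) = t ^ Suc m"
    unfolding t_def by (metis mult.commute power_mult)
  then have "doubling_seq f (Suc m * k) (apow a (Suc m))
      = inverse (t ^ Suc m) *\<^sub>R f (apow (t *\<^sub>R a) (Suc m))"
    unfolding doubling_seq_def apow_scaleR by simp
  moreover have "jordan_sum (Suc m) a (doubling_seq f k a)
      = inverse (t ^ Suc m) *\<^sub>R jordan_sum (Suc m) (t *\<^sub>R a) (f (t *\<^sub>R a))"
    using jordan_sum_scaleR[of m 1 a "inverse t" "f (t *\<^sub>R a)"]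
      jordan_sum_scaleR[of m t a 1 "f (t *\<^sub>R a)"] t
    by (simp add: doubling_seq_def t_def field_simps)
  ultimately show ?thesis
    by (simp add: scaleR_diff_right mult.commute)
qed

locale approx_star_jordan =
  fixes f :: "'a::cstar_algebra \<Rightarrow> 'a" and n :: nat and p \<theta> :: real
  assumes two_le_n: "2 \<le> n" and p_lt_1: "p < 1"
    and approx: "\<And>\<mu> x y a w. cmod \<mu> = 1 \<Longrightarrow>
      norm (\<mu> *\<^sub>C f ((1/2) *\<^sub>R (x + y)) + \<mu> *\<^sub>C f ((1/2) *\<^sub>R (x - y)) - f (\<mu> *\<^sub>C x)
            + f (apow a n) - jordan_sum n a (f a)
            + f (cstar w) - cstar (f w))
      \<le> \<theta> * (norm x powr p + norm y powr p + norm a powr p + norm w powr p)"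
begin

lemma f_zero: "f 0 = 0"
proof -
  \<comment> \<open>At x = y = a = w = 0, comparing \<mu> = 1 with \<mu> = -1 leaves only 4 f 0.\<close>
  define R where "R = f (apow 0 n) - jordan_sum n 0 (f 0) + f (cstar 0) - cstar (f 0)"
  have R: "\<mu> *\<^sub>C f 0 + \<mu> *\<^sub>C f 0 - f 0 + R = 0" if "cmod \<mu> = 1" for \<mu>
  proof -
    have "norm (\<mu> *\<^sub>C f 0 + \<mu> *\<^sub>C f 0 - f 0 + R) \<le> 0"
      using approx[OF that, of 0 0 0 0] by (simp add: R_def algebra_simps)
    then show ?thesis
      by simp
  qed
  have "2 *\<^sub>R 2 *\<^sub>R f 0
      = (1 *\<^sub>C f 0 + 1 *\<^sub>C f 0 - f 0 + R) - ((-1) *\<^sub>C f 0 + (-1) *\<^sub>C f 0 - f 0 + R)"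
    by (simp add: cscale_one cscale_minus_one scaleR_2 algebra_simps)
  then show ?thesis
    using R[of 1] R[of "-1"] by simp
qed

lemma approx_additive:
  "norm (f (u + v) - (f u + f v)) \<le> \<theta> * (norm (u + v) powr p + norm (u - v) powr p)"
proof -
  have "(1/2::real) *\<^sub>R ((u + v) + (u - v)) = u" "(1/2::real) *\<^sub>R ((u + v) - (u - v)) = v"
    by (simp_all add: scaleR_2[symmetric] algebra_simps)
  then show ?thesis
    using approx[of 1 "u + v" "u - v" 0 0] by (simp add: cscale_one f_zero norm_minus_commute)
qed

lemma approx_unimodular:
  "cmod \<mu> = 1 \<Longrightarrow> norm (f (\<mu> *\<^sub>C u) - \<mu> *\<^sub>C f u) \<le> 2 * \<theta> * norm u powr p"
  using approx[of \<mu> u u 0 0] by (simp add: f_zero scaleR_2[symmetric] norm_minus_commute)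

lemma approx_jordan: "norm (f (apow a n) - jordan_sum n a (f a)) \<le> \<theta> * norm a powr p"
  using approx[of 1 0 0 a 0] by (simp add: cscale_one f_zero)

lemma approx_star: "norm (f (cstar w) - cstar (f w)) \<le> \<theta> * norm w powr p"
  using approx[of 1 0 0 0 w] by (simp add: cscale_one f_zero)

lemma approx_double: "norm (f (2 *\<^sub>R u) - 2 *\<^sub>R f u) \<le> \<theta> * 2 powr p * norm u powr p"
  using approx_additive[of u u] norm_pow2_scaleR_powr[of 1 u p]
  by (simp add: scaleR_2 norm_minus_commute mult.assoc)

sublocale doubling: approx_doubling f "\<theta> * 2 powr p" p
  by unfold_locales (rule approx_double, rule p_lt_1)

lemma doubling_limit_add: "doubling_limit f (x + y) = doubling_limit f x + doubling_limit f y"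
proof (rule LIMSEQ_eq_if_diff_tendsto_zero)
  show "(\<lambda>k. doubling_seq f k (x + y)) \<longlonglongrightarrow> doubling_limit f (x + y)"
    by (rule doubling.doubling_seq_tendsto)
  show "(\<lambda>k. doubling_seq f k x + doubling_seq f k y) \<longlonglongrightarrow> doubling_limit f x + doubling_limit f y"
    by (intro tendsto_add doubling.doubling_seq_tendsto)
  let ?u = "\<lambda>k. (2::real) ^ k *\<^sub>R x" and ?v = "\<lambda>k. (2::real) ^ k *\<^sub>R y"
  have "doubling_seq f k (x + y) - (doubling_seq f k x + doubling_seq f k y)
      = inverse (2 ^ k) *\<^sub>R (f (?u k + ?v k) - (f (?u k) + f (?v k)))" for k
    by (simp add: doubling_seq_def scaleR_add_right scaleR_diff_right)
  moreover have "(\<lambda>k. inverse (2 ^ k) *\<^sub>R (f (?u k + ?v k) - (f (?u k) + f (?v k)))) \<longlonglongrightarrow> 0"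
  proof (rule scaled_errors_tendsto_zero[OF _ p_lt_1])
    show "norm (f (?u k + ?v k) - (f (?u k) + f (?v k)))
        \<le> \<theta> * (norm (x + y) powr p + norm (x - y) powr p) * (2 powr p) ^ k" for k
      using approx_additive[of "?u k" "?v k"]
      unfolding scaleR_add_right[symmetric] scaleR_diff_right[symmetric] norm_pow2_scaleR_powr
      by (simp add: algebra_simps)
  qed
  ultimately show "(\<lambda>k. doubling_seq f k (x + y) - (doubling_seq f k x + doubling_seq f k y)) \<longlonglongrightarrow> 0"
    by simp
qed

lemma doubling_limit_unimodular:
  assumes "cmod \<mu> = 1"
  shows "doubling_limit f (\<mu> *\<^sub>C x) = \<mu> *\<^sub>C doubling_limit f x"
proof (rule LIMSEQ_eq_if_diff_tendsto_zero)
  show "(\<lambda>k. doubling_seq f k (\<mu> *\<^sub>C x)) \<longlonglongrightarrow> doubling_limit f (\<mu> *\<^sub>C x)"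
    by (rule doubling.doubling_seq_tendsto)
  show "(\<lambda>k. \<mu> *\<^sub>C doubling_seq f k x) \<longlonglongrightarrow> \<mu> *\<^sub>C doubling_limit f x"
    by (rule bounded_linear.tendsto[OF bounded_linear_cscale doubling.doubling_seq_tendsto])
  let ?u = "\<lambda>k. (2::real) ^ k *\<^sub>R x"
  have "doubling_seq f k (\<mu> *\<^sub>C x) - \<mu> *\<^sub>C doubling_seq f k x
      = inverse (2 ^ k) *\<^sub>R (f (\<mu> *\<^sub>C ?u k) - \<mu> *\<^sub>C f (?u k))" for k
    by (simp add: doubling_seq_def cscale_scaleR_commute scaleR_diff_right)
  moreover have "(\<lambda>k. inverse (2 ^ k) *\<^sub>R (f (\<mu> *\<^sub>C ?u k) - \<mu> *\<^sub>C f (?u k))) \<longlonglongrightarrow> 0"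
  proof (rule scaled_errors_tendsto_zero[OF _ p_lt_1])
    show "norm (f (\<mu> *\<^sub>C ?u k) - \<mu> *\<^sub>C f (?u k)) \<le> 2 * \<theta> * norm x powr p * (2 powr p) ^ k" for k
      using approx_unimodular[OF assms, of "?u k"] unfolding norm_pow2_scaleR_powr
      by (simp add: algebra_simps)
  qed
  ultimately show "(\<lambda>k. doubling_seq f k (\<mu> *\<^sub>C x) - \<mu> *\<^sub>C doubling_seq f k x) \<longlonglongrightarrow> 0"
    by simp
qed

lemma doubling_limit_star: "doubling_limit f (cstar w) = cstar (doubling_limit f w)"
proof (rule LIMSEQ_eq_if_diff_tendsto_zero)
  show "(\<lambda>k. doubling_seq f k (cstar w)) \<longlonglongrightarrow> doubling_limit f (cstar w)"
    by (rule doubling.doubling_seq_tendsto)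
  show "(\<lambda>k. cstar (doubling_seq f k w)) \<longlonglongrightarrow> cstar (doubling_limit f w)"
    by (rule bounded_linear.tendsto[OF bounded_linear_cstar doubling.doubling_seq_tendsto])
  let ?u = "\<lambda>k. (2::real) ^ k *\<^sub>R w"
  have "doubling_seq f k (cstar w) - cstar (doubling_seq f k w)
      = inverse (2 ^ k) *\<^sub>R (f (cstar (?u k)) - cstar (f (?u k)))" for k
    by (simp add: doubling_seq_def cstar_scaleR scaleR_diff_right)
  moreover have "(\<lambda>k. inverse (2 ^ k) *\<^sub>R (f (cstar (?u k)) - cstar (f (?u k)))) \<longlonglongrightarrow> 0"
  proof (rule scaled_errors_tendsto_zero[OF _ p_lt_1])
    show "norm (f (cstar (?u k)) - cstar (f (?u k))) \<le> \<theta> * norm w powr p * (2 powr p) ^ k" for k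
      using approx_star[of "?u k"] unfolding norm_pow2_scaleR_powr by (simp add: algebra_simps)
  qed
  ultimately show "(\<lambda>k. doubling_seq f k (cstar w) - cstar (doubling_seq f k w)) \<longlonglongrightarrow> 0"
    by simp
qed

lemma doubling_limit_jordan:
  "doubling_limit f (apow a n) = jordan_sum n a (doubling_limit f a)"
proof -
  obtain m where n: "n = Suc m"
    using two_le_n by (cases n) simp_all
  have "strict_mono (\<lambda>k. Suc m * k)"
    by (rule strict_monoI) (simp only: Suc_mult_less_cancel1)
  then have subseq: "(\<lambda>k. doubling_seq f (Suc m * k) (apow a (Suc m)))
      \<longlonglongrightarrow> doubling_limit f (apow a (Suc m))"
    using LIMSEQ_subseq_LIMSEQ[OF doubling.doubling_seq_tendsto] by (simp add: o_def)
  let ?u = "\<lambda>k. (2::real) ^ k *\<^sub>R a"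
  let ?e = "\<lambda>k. inverse ((2 ^ k) ^ m) *\<^sub>R
    (f (apow (?u k) (Suc m)) - jordan_sum (Suc m) (?u k) (f (?u k)))"
  have "(\<lambda>k. inverse (2 ^ k) *\<^sub>R ?e k) \<longlonglongrightarrow> 0"
  proof (rule scaled_errors_tendsto_zero[OF _ p_lt_1])
    fix k
    have "norm (?e k) \<le> norm (f (apow (?u k) (Suc m)) - jordan_sum (Suc m) (?u k) (f (?u k)))"
      by (simp add: mult_left_le_one_le inverse_le_1_iff one_le_power)
    also have "\<dots> \<le> \<theta> * norm a powr p * (2 powr p) ^ k"
      using approx_jordan[of "?u k"] unfolding n norm_pow2_scaleR_powr by (simp add: algebra_simps)
    finally show "norm (?e k) \<le> \<theta> * norm a powr p * (2 powr p) ^ k" .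
  qed
  then have "(\<lambda>k. doubling_seq f (Suc m * k) (apow a (Suc m))
      - jordan_sum (Suc m) a (doubling_seq f k a)) \<longlonglongrightarrow> 0"
    by (simp only: doubling_seq_apow_diff)
  with subseq tendsto_jordan_sum[OF doubling.doubling_seq_tendsto] show ?thesis
    unfolding n by (rule LIMSEQ_eq_if_diff_tendsto_zero)
qed

lemma star_n_jordan_derivation_doubling_limit: "star_n_jordan_derivation n (doubling_limit f)"
  unfolding star_n_jordan_derivation_def n_jordan_derivation_def
  by (simp add: clinear_mapI_unimodular doubling_limit_add doubling_limit_unimodular
      doubling_limit_jordan doubling_limit_star)

lemma norm_diff_doubling_limit:
  "norm (f x - doubling_limit f x) \<le> (2 powr p * \<theta>) / (2 - 2 powr p) * norm x powr p"
  using doubling.norm_diff_doubling_limit_le[of x] by (simp add: mult.commute)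

lemma star_n_jordan_derivation_eq_doubling_limit:
  assumes "star_n_jordan_derivation n D" and "\<And>x. norm (f x - D x) \<le> K * norm x powr p"
  shows "D = doubling_limit f"
proof (rule doubling.doubling_limit_unique)
  show "D (2 ^ k *\<^sub>R x) = 2 ^ k *\<^sub>R D x" for x k
    using assms(1) by (simp add: star_n_jordan_derivation_def n_jordan_derivation_def
        clinear_map_def scaleR_cscale)
qed (rule assms(2))

end

theorem corollary2p4:
  fixes f :: "'a::cstar_algebra \<Rightarrow> 'a" and n :: nat and p \<theta> :: real
  assumes "n \<ge> 2" and "0 < p" and "p < 1" and "0 \<le> \<theta>"
    and "\<And>\<mu> x y a w. cmod \<mu> = 1 \<Longrightarrow>
      norm (\<mu> *\<^sub>C f ((1/2) *\<^sub>R (x + y)) + \<mu> *\<^sub>C f ((1/2) *\<^sub>R (x - y)) - f (\<mu> *\<^sub>C x)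
            + f (apow a n) - jordan_sum n a (f a)
            + f (cstar w) - cstar (f w))
      \<le> \<theta> * (norm x powr p + norm y powr p + norm a powr p + norm w powr p)"
  shows "\<exists>!D. star_n_jordan_derivation n D \<and>
           (\<forall>x. norm (f x - D x) \<le> (2 powr p * \<theta>) / (2 - 2 powr p) * norm x powr p)"
proof -
  interpret approx_star_jordan f n p \<theta>
    using assms(1,3,5) by unfold_locales auto
  show ?thesis
  proof (rule ex1I[of _ "doubling_limit f"])
    show "star_n_jordan_derivation n (doubling_limit f) \<and>
        (\<forall>x. norm (f x - doubling_limit f x) \<le> (2 powr p * \<theta>) / (2 - 2 powr p) * norm x powr p)"
      using star_n_jordan_derivation_doubling_limit norm_diff_doubling_limit by blast
  qed (use star_n_jordan_derivation_eq_doubling_limit in blast)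
qed

end
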